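(* Let $s$ be a positive integer, let $\lambda_0 \geq 0 > \lambda_1$ be real numbers and let $z_1, \ldots, z_{2s}$ be complex numbers with $z_j = a_j + b_j i$, $a_j \in \mathbb{R}$, $b_j > 0$ for $j = 1, \ldots, 2s$. If $\lambda_0 + \lambda_1 - 2\sum_{j=1}^{2s} |z_j| \geq 0$, then there is a $(4s+2) \times (4s+2)$ normal centrosymmetric nonnegative matrix with eigenvalues $\lambda_0, \lambda_1, z_1, \ldots, z_{2s}, \overline{z}_1, \ldots, \overline{z}_{2s}$.
   Context: $J$ denotes the reverse identity matrix of the appropriate size (ones on the anti-diagonal, zeros elsewhere). A square matrix $Q$ is centrosymmetric if $JQJ = Q$, nonnegative if all entries are nonnegative, and normal if $QQ^* = Q^*Q$. *)

theory Defs
  imports "Jordan_Normal_Form.Char_Poly" "Jordan_Normal_Form.Schur_Decomposition"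
begin

definition exchange_mat :: "nat \<Rightarrow> 'a :: {zero,one} mat" where
  "exchange_mat n = mat n n (\<lambda>(i,j). if i + j = n - 1 then 1 else 0)"

definition centrosymmetric :: "'a :: semiring_1 mat \<Rightarrow> bool" where
  "centrosymmetric Q \<longleftrightarrow> square_mat Q \<and>
     exchange_mat (dim_row Q) * Q * exchange_mat (dim_row Q) = Q"

definition nonneg_mat :: "real mat \<Rightarrow> bool" where
  "nonneg_mat Q \<longleftrightarrow> (\<forall>i < dim_row Q. \<forall>j < dim_col Q. Q $$ (i,j) \<ge> 0)"

definition normal_mat :: "complex mat \<Rightarrow> bool" where
  "normal_mat Q \<longleftrightarrow> square_mat Q \<and> Q * mat_adjoint Q = mat_adjoint Q * Q"

definition has_eigenvalues :: "complex mat \<Rightarrow> complex list \<Rightarrow> bool" where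
  "has_eigenvalues Q xs \<longleftrightarrow> square_mat Q \<and>
     char_poly Q = (\<Prod>x\<leftarrow>xs. [:- x, 1:])"

end

theory Submission
  imports Defs
begin

(* The matrix is written down through its spectral decomposition Q = U D U^*.
   For a row index a < 4s+2 let \<sigma>(a) < 2s+1 be a folded onto the first half
   (a or 4s+1-a) and \<epsilon>(a) = \<plusminus>1 record the half. Up to the factor 1/sqrt(4s+2),
   the columns of U are the constant vector, \<epsilon>, the vectors \<omega>^(j \<sigma>(a)) and
   \<epsilon>(a) \<omega>^(j \<sigma>(a)) for 1 \<le> j \<le> s with \<omega> = exp(2\<pi>i/(2s+1)), and their conjugates;
   D carries l0, l1, the z_j and their conjugates on the matching columns.
   That U is unitary is the case l0 = l1 = z_j = 1 of the entry formula for U D U^*,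
   where it reduces to the vanishing of the Dirichlet kernel at the nonzero
   multiples of 2\<pi>/(2s+1). Pairing z_j with its conjugate makes Q real; the
   reflection a \<mapsto> 4s+1-a multiplies every column of U by \<plusminus>1, so Q is
   centrosymmetric; and since all entries of \<surd>(4s+2) U have modulus 1, every entry
   of Q is at least (l0 + l1 - 2 \<Sigma>|z_j|)/(4s+2) \<ge> 0. *)

lemma dim_mat_adjoint [simp]:
  "dim_row (mat_adjoint A) = dim_col A" "dim_col (mat_adjoint A) = dim_row A"
  by (simp_all add: mat_adjoint_def mat_of_rows_def)

lemma index_mat_adjoint [simp]:
  fixes A :: "complex mat"
  assumes "i < dim_col A" "j < dim_row A"
  shows "mat_adjoint A $$ (i, j) = cnj (A $$ (j, i))"
  using assms unfolding mat_adjoint_def by (simp add: mat_of_rows_def)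

lemma mat_adjoint_adjoint [simp]:
  fixes A :: "complex mat"
  shows "mat_adjoint (mat_adjoint A) = A"
  by (rule eq_matI) auto

lemma mat_adjoint_mult:
  fixes A B :: "complex mat"
  assumes "A \<in> carrier_mat n m" "B \<in> carrier_mat m p"
  shows "mat_adjoint (A * B) = mat_adjoint B * mat_adjoint A"
  by (rule eq_matI) (use assms in \<open>auto simp: scalar_prod_def mult.commute\<close>)

lemma mat_adjoint_mat_diag:
  "mat_adjoint (mat_diag n d) = mat_diag n (\<lambda>k. cnj (d k))"
  by (rule eq_matI) (auto simp: mat_diag_def)

lemma index_mult_diag_mult_adjoint:
  fixes U :: "complex mat"
  assumes U: "U \<in> carrier_mat n n" and "a < n" "b < n"
  shows "(U * mat_diag n d * mat_adjoint U) $$ (a, b) = (\<Sum>k<n. U $$ (a, k) * d k * cnj (U $$ (b, k)))"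
proof -
  have "(U * mat_diag n d * mat_adjoint U) $$ (a, b) = (\<Sum>k\<in>{0..<n}. U $$ (a, k) * d k * mat_adjoint U $$ (k, b))"
    unfolding mat_diag_mult_right[OF U] using assms by (simp add: scalar_prod_def)
  also have "\<dots> = (\<Sum>k<n. U $$ (a, k) * d k * cnj (U $$ (b, k)))"
    using assms by (intro sum.cong) auto
  finally show ?thesis .
qed

lemma sandwich_mult:
  fixes U A X Y :: "'a::comm_ring_1 mat"
  assumes U: "U \<in> carrier_mat n n" and A: "A \<in> carrier_mat n n"
    and X: "X \<in> carrier_mat n n" and Y: "Y \<in> carrier_mat n n" and AU: "A * U = 1\<^sub>m n"
  shows "(U * X * A) * (U * Y * A) = U * (X * Y) * A"
proof -
  have UX: "U * X \<in> carrier_mat n n" and YA: "Y * A \<in> carrier_mat n n"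
    and UYA: "U * Y * A \<in> carrier_mat n n" using U X Y A by auto
  have "A * (U * Y * A) = (A * U) * (Y * A)"
    by (simp only: assoc_mult_mat[OF U Y A] assoc_mult_mat[OF A U YA])
  also have "\<dots> = Y * A" unfolding AU by (rule left_mult_one_mat[OF YA])
  finally have cancel: "A * (U * Y * A) = Y * A" .
  have "(U * X * A) * (U * Y * A) = (U * X) * (Y * A)"
    by (simp only: assoc_mult_mat[OF UX A UYA] cancel)
  also have "\<dots> = U * (X * Y) * A"
    by (simp only: assoc_mult_mat[OF U X YA] assoc_mult_mat[OF X Y A]
        assoc_mult_mat[OF U mult_carrier_mat[OF X Y] A])
  finally show ?thesis .
qed

lemma
  fixes U :: "complex mat"
  assumes U: "U \<in> carrier_mat n n" and unitary: "U * mat_adjoint U = 1\<^sub>m n"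
  shows normal_mat_unitary_diag: "normal_mat (U * mat_diag n d * mat_adjoint U)"
    and has_eigenvalues_unitary_diag: "has_eigenvalues (U * mat_diag n d * mat_adjoint U) (map d [0..<n])"
proof -
  let ?A = "mat_adjoint U" and ?D = "mat_diag n d" and ?D' = "mat_diag n (\<lambda>k. cnj (d k))"
  have A: "?A \<in> carrier_mat n n" using U by (intro carrier_matI) auto
  have AU: "?A * U = 1\<^sub>m n" by (rule mat_mult_left_right_inverse[OF U A unitary])
  have Q: "U * ?D * ?A \<in> carrier_mat n n" using U A by (meson mult_carrier_mat mat_diag_dim)
  have "mat_adjoint (U * ?D * ?A) = mat_adjoint ?A * mat_adjoint (U * ?D)"
    using U A by (intro mat_adjoint_mult[of _ n n _ n]) auto
  also have "\<dots> = U * (?D' * ?A)"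
    using U by (simp add: mat_adjoint_mult[of _ n n _ n] mat_adjoint_mat_diag)
  also have "\<dots> = U * ?D' * ?A"
    using U A by (simp add: assoc_mult_mat[of _ n n _ n _ n])
  finally have adj: "mat_adjoint (U * ?D * ?A) = U * ?D' * ?A" .
  have "(U * ?D * ?A) * mat_adjoint (U * ?D * ?A) = U * (?D * ?D') * ?A"
    unfolding adj by (rule sandwich_mult[OF U A _ _ AU]) auto
  also have "?D * ?D' = ?D' * ?D" by (simp add: mult.commute)
  also have "U * (?D' * ?D) * ?A = mat_adjoint (U * ?D * ?A) * (U * ?D * ?A)"
    unfolding adj by (rule sandwich_mult[OF U A _ _ AU, symmetric]) auto
  finally show "normal_mat (U * ?D * ?A)"
    unfolding normal_mat_def using Q by auto
  have "similar_mat (U * ?D * ?A) ?D"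
    unfolding similar_mat_def similar_mat_wit_def Let_def using U A Q AU unitary by auto
  then have "char_poly (U * ?D * ?A) = char_poly ?D" by (rule char_poly_similar)
  also have "\<dots> = (\<Prod>x\<leftarrow>diag_mat ?D. [:- x, 1:])"
    by (rule char_poly_upper_triangular) (auto simp: upper_triangular_def mat_diag_def)
  also have "diag_mat ?D = map d [0..<n]"
    by (simp add: diag_mat_def mat_diag_def)
  finally show "has_eigenvalues (U * ?D * ?A) (map d [0..<n])"
    unfolding has_eigenvalues_def using Q by auto
qed

lemma exchange_mat_mult_left:
  fixes M :: "'a::semiring_1 mat"
  assumes "M \<in> carrier_mat n n"
  shows "exchange_mat n * M = mat n n (\<lambda>(i,j). M $$ (n - 1 - i, j))"
proof (rule eq_matI)
  fix i j assume "i < dim_row (mat n n (\<lambda>(i,j). M $$ (n - 1 - i, j)))"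
    "j < dim_col (mat n n (\<lambda>(i,j). M $$ (n - 1 - i, j)))"
  then have ij: "i < n" "j < n" by auto
  have "(exchange_mat n * M) $$ (i,j) = (\<Sum>k\<in>{0..<n}. (if i + k = n - 1 then 1 else 0) * M $$ (k,j))"
    using assms ij by (simp add: exchange_mat_def scalar_prod_def)
  also have "\<dots> = (\<Sum>k\<in>{0..<n}. if k = n - 1 - i then M $$ (k,j) else 0)"
    using ij by (intro sum.cong) auto
  finally show "(exchange_mat n * M) $$ (i,j) = mat n n (\<lambda>(i,j). M $$ (n - 1 - i, j)) $$ (i,j)"
    using ij by (simp add: sum.delta')
qed (use assms in \<open>auto simp: exchange_mat_def\<close>)

lemma exchange_mat_mult_right:
  fixes M :: "'a::semiring_1 mat"
  assumes "M \<in> carrier_mat n n"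
  shows "M * exchange_mat n = mat n n (\<lambda>(i,j). M $$ (i, n - 1 - j))"
proof (rule eq_matI)
  fix i j assume "i < dim_row (mat n n (\<lambda>(i,j). M $$ (i, n - 1 - j)))"
    "j < dim_col (mat n n (\<lambda>(i,j). M $$ (i, n - 1 - j)))"
  then have ij: "i < n" "j < n" by auto
  have "(M * exchange_mat n) $$ (i,j) = (\<Sum>k\<in>{0..<n}. M $$ (i,k) * (if k + j = n - 1 then 1 else 0))"
    using assms ij by (simp add: exchange_mat_def scalar_prod_def)
  also have "\<dots> = (\<Sum>k\<in>{0..<n}. if k = n - 1 - j then M $$ (i,k) else 0)"
    using ij by (intro sum.cong) auto
  finally show "(M * exchange_mat n) $$ (i,j) = mat n n (\<lambda>(i,j). M $$ (i, n - 1 - j)) $$ (i,j)"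
    using ij by (simp add: sum.delta')
qed (use assms in \<open>auto simp: exchange_mat_def\<close>)

lemma centrosymmetricI:
  fixes Q :: "'a::semiring_1 mat"
  assumes Q: "Q \<in> carrier_mat n n"
    and symm: "\<And>i j. i < n \<Longrightarrow> j < n \<Longrightarrow> Q $$ (n - 1 - i, n - 1 - j) = Q $$ (i, j)"
  shows "centrosymmetric Q"
proof -
  have "exchange_mat n * Q * exchange_mat n = Q"
    unfolding exchange_mat_mult_left[OF Q]
    by (subst exchange_mat_mult_right) (use Q symm in \<open>auto intro!: eq_matI\<close>)
  then show ?thesis unfolding centrosymmetric_def using Q by auto
qed

lemma sin_half_mult_dirichlet_kernel:
  fixes x :: real
  shows "sin (x/2) * (1 + (\<Sum>i=1..s. 2 * cos (real i * x))) = sin ((real s + 1/2) * x)"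
proof (induction s)
  case 0
  then show ?case by (simp add: mult.commute)
next
  case (Suc s)
  have "sin (x/2) * (1 + (\<Sum>i=1..Suc s. 2 * cos (real i * x))) =
        sin (x/2) * (1 + (\<Sum>i=1..s. 2 * cos (real i * x))) + 2 * sin (x/2) * cos (real (Suc s) * x)"
    by (simp add: algebra_simps)
  also have "\<dots> = sin ((real s + 1/2) * x) + (sin (real (Suc s) * x + x/2) - sin (real (Suc s) * x - x/2))"
    using Suc by (simp add: sin_add sin_diff)
  also have "real (Suc s) * x - x/2 = (real s + 1/2) * x" by (simp add: algebra_simps)
  also have "real (Suc s) * x + x/2 = (real (Suc s) + 1/2) * x" by (simp add: algebra_simps)
  finally show ?case by simp
qed

lemma dirichlet_kernel_root:
  fixes k :: int
  assumes "\<not> (2 * int s + 1) dvd k"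
  shows "1 + (\<Sum>i=1..s. 2 * cos (real i * (2 * pi * k / (2 * s + 1)))) = 0"
proof -
  define x where "x = 2 * pi * k / (2 * s + 1)"
  have "sin (x/2) \<noteq> 0"
  proof
    assume "sin (x/2) = 0"
    moreover have "x/2 = (k / (2 * s + 1)) * pi" by (simp add: x_def field_simps)
    ultimately obtain q where "k / (2 * s + 1) = of_int q" using sin_times_pi_eq_0 by (metis Ints_cases)
    then have "real_of_int k = real_of_int (q * (2 * int s + 1))" by (simp add: field_simps)
    then have "k = q * (2 * int s + 1)" by (simp only: of_int_eq_iff)
    then show False using assms by simp
  qed
  moreover have "sin ((real s + 1/2) * x) = 0"
  proof -
    have "(real s + 1/2) * x = k * pi" by (simp add: x_def field_simps)
    then show ?thesis by (simp add: sin_times_pi_eq_0)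
  qed
  ultimately show ?thesis
    using sin_half_mult_dirichlet_kernel[of x s] by (simp add: x_def)
qed

lemma sum_lessThan_double:
  fixes F :: "nat \<Rightarrow> 'a::comm_monoid_add"
  shows "(\<Sum>k<m+m. F k) = (\<Sum>k<m. F k + F (k + m))"
proof -
  have "(\<Sum>k<m+m. F k) = (\<Sum>k<m. F k) + (\<Sum>k\<in>{0+m..<m+m}. F k)"
    by (simp add: lessThan_atLeast0 sum.atLeastLessThan_concat)
  also have "(\<Sum>k\<in>{0+m..<m+m}. F k) = (\<Sum>k<m. F (k + m))"
    by (simp only: sum.shift_bounds_nat_ivl lessThan_atLeast0)
  finally show ?thesis by (simp add: sum.distrib)
qed

lemma sum_lessThan_pairs:
  fixes F :: "nat \<Rightarrow> 'a::comm_monoid_add"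
  shows "(\<Sum>k<2*m+2. F k) = F 0 + F 1 + (\<Sum>j=1..m. F (j+1) + F (j+1+m))"
proof -
  have "(\<Sum>k<2*m+2. F k) = F 0 + (F 1 + (\<Sum>k<m+m. F (k+2)))"
    by (simp add: sum.lessThan_Suc_shift numeral_2_eq_2 mult_2 del: sum.lessThan_Suc)
  also have "(\<Sum>k<m+m. F (k+2)) = (\<Sum>j=1..m. F (j+1) + F (j+1+m))"
    by (simp add: sum_lessThan_double sum.atLeast1_atMost_eq)
  finally show ?thesis by (simp add: add.assoc)
qed

lemma map_plus_upt: "map (\<lambda>j. j + k) [a..<b] = [a + k..<b + k]"
  by (induction b) auto

definition half_sign :: "nat \<Rightarrow> nat \<Rightarrow> real" where
  "half_sign s a = (if a < 2*s+1 then 1 else -1)"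

definition fold_index :: "nat \<Rightarrow> nat \<Rightarrow> nat" where
  "fold_index s a = (if a < 2*s+1 then a else 4*s+1 - a)"

definition wave :: "nat \<Rightarrow> nat \<Rightarrow> nat \<Rightarrow> complex" where
  "wave s j a = (if j \<le> s then 1 else complex_of_real (half_sign s a)) *
     cis (2*pi * real (if j \<le> s then j else j - s) * real (fold_index s a) / real (2*s+1))"

definition cs_mat :: "nat \<Rightarrow> real \<Rightarrow> real \<Rightarrow> (nat \<Rightarrow> complex) \<Rightarrow> real mat" where
  "cs_mat s l0 l1 z = mat (4*s+2) (4*s+2) (\<lambda>(a, b). (l0 + half_sign s a * half_sign s b * l1 +
     (\<Sum>j=1..2*s. 2 * Re (z j * wave s j a * cnj (wave s j b)))) / real (4*s+2))"

lemma cs_mat_carrier [simp]: "cs_mat s l0 l1 z \<in> carrier_mat (4*s+2) (4*s+2)"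
  by (simp add: cs_mat_def)

lemma wave_mult_cnj:
  "wave s j a * cnj (wave s j b) =
     (if j \<le> s then 1 else complex_of_real (half_sign s a * half_sign s b)) *
     cis (real (if j \<le> s then j else j - s) * (2*pi * (real (fold_index s a) - real (fold_index s b)) / real (2*s+1)))"
proof -
  have "cis (2*pi * r * real (fold_index s a) / real (2*s+1)) * cnj (cis (2*pi * r * real (fold_index s b) / real (2*s+1)))
     = cis (r * (2*pi * (real (fold_index s a) - real (fold_index s b)) / real (2*s+1)))" for r
    unfolding cis_cnj cis_mult by (simp add: algebra_simps diff_divide_distrib)
  then show ?thesis by (auto simp: wave_def)
qed

lemma Re_wave_mult_cnj:
  "Re (wave s j a * cnj (wave s j b)) =
     (if j \<le> s then 1 else half_sign s a * half_sign s b) *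
     cos (real (if j \<le> s then j else j - s) * (2*pi * (real (fold_index s a) - real (fold_index s b)) / real (2*s+1)))"
  unfolding wave_mult_cnj by (simp add: Re_complex_of_real)

lemma sum_Re_wave_mult_cnj:
  fixes s a b :: nat
  defines "x \<equiv> 2*pi * (real (fold_index s a) - real (fold_index s b)) / real (2*s+1)"
  shows "(\<Sum>j=1..2*s. 2 * Re (wave s j a * cnj (wave s j b))) =
     (1 + half_sign s a * half_sign s b) * (\<Sum>i=1..s. 2 * cos (real i * x))"
proof -
  let ?f = "\<lambda>j. 2 * Re (wave s j a * cnj (wave s j b))"
  have "{1..2*s} = {1..s} \<union> {s+1..s+s}" by auto
  then have "(\<Sum>j=1..2*s. ?f j) = (\<Sum>j=1..s. ?f j) + (\<Sum>j=s+1..s+s. ?f j)"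
    by (simp only:) (rule sum.union_disjoint; auto)
  also have "(\<Sum>j=1..s. ?f j) = (\<Sum>i=1..s. 2 * cos (real i * x))"
    by (intro sum.cong refl, subst Re_wave_mult_cnj) (simp add: x_def)
  also have "(\<Sum>j=s+1..s+s. ?f j) = (\<Sum>i=1..s. ?f (i + s))"
    by (simp only: sum.shift_bounds_cl_nat_ivl[of ?f 1 s s, symmetric] add.commute)
  also have "\<dots> = (\<Sum>i=1..s. half_sign s a * half_sign s b * (2 * cos (real i * x)))"
    by (intro sum.cong refl, subst Re_wave_mult_cnj) (simp add: x_def)
  finally show ?thesis by (simp add: sum_distrib_left algebra_simps)
qed

lemma cs_mat_one: "cs_mat s 1 1 (\<lambda>_. 1) = 1\<^sub>m (4*s+2)"
proof (rule eq_matI)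
  fix a b assume "a < dim_row (1\<^sub>m (4*s+2) :: real mat)" "b < dim_col (1\<^sub>m (4*s+2) :: real mat)"
  then have a: "a < 4*s+2" and b: "b < 4*s+2" by auto
  define x where "x = 2*pi * (real (fold_index s a) - real (fold_index s b)) / real (2*s+1)"
  have entry: "cs_mat s 1 1 (\<lambda>_. 1) $$ (a, b) =
      (1 + half_sign s a * half_sign s b) * (1 + (\<Sum>i=1..s. 2 * cos (real i * x))) / real (4*s+2)"
    using a b sum_Re_wave_mult_cnj[of s a b] unfolding x_def by (simp add: cs_mat_def algebra_simps)
  consider "a = b" | "a \<noteq> b" "fold_index s a = fold_index s b" | "fold_index s a \<noteq> fold_index s b"
    by blast
  then show "cs_mat s 1 1 (\<lambda>_. 1) $$ (a, b) = 1\<^sub>m (4*s+2) $$ (a, b)"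
  proof cases
    case 1
    then have "x = 0" by (simp add: x_def)
    moreover have "half_sign s a * half_sign s a = 1" by (simp add: half_sign_def)
    ultimately show ?thesis unfolding entry using 1 a by simp
  next
    case 2
    then have "half_sign s a * half_sign s b = -1"
      using a b by (auto simp: fold_index_def half_sign_def split: if_splits)
    then show ?thesis unfolding entry using 2 a b by simp
  next
    case 3
    let ?k = "int (fold_index s a) - int (fold_index s b)"
    have "fold_index s a < 2*s+1" "fold_index s b < 2*s+1"
      using a b by (auto simp: fold_index_def)
    then have "\<bar>?k\<bar> < \<bar>2 * int s + 1\<bar>" by auto
    moreover have "?k \<noteq> 0" using 3 by simp
    ultimately have "\<not> (2 * int s + 1) dvd ?k" using dvd_imp_le_int[of ?k] by force
    then have "1 + (\<Sum>i=1..s. 2 * cos (real i * x)) = 0"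
      using dirichlet_kernel_root[of s ?k] by (simp add: x_def)
    moreover have "a \<noteq> b" using 3 by auto
    ultimately show ?thesis unfolding entry using a b by simp
  qed
qed (auto simp: cs_mat_def)

definition eigvec :: "nat \<Rightarrow> nat \<Rightarrow> nat \<Rightarrow> complex" where
  "eigvec s a k = (if k = 0 then 1 else if k = 1 then complex_of_real (half_sign s a)
     else if k \<le> 2*s+1 then wave s (k - 1) a else cnj (wave s (k - 1 - 2*s) a))"

definition eigvec_mat :: "nat \<Rightarrow> complex mat" where
  "eigvec_mat s = mat (4*s+2) (4*s+2) (\<lambda>(a, k). eigvec s a k / complex_of_real (sqrt (real (4*s+2))))"

definition eigval :: "nat \<Rightarrow> real \<Rightarrow> real \<Rightarrow> (nat \<Rightarrow> complex) \<Rightarrow> nat \<Rightarrow> complex" where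
  "eigval s l0 l1 z k = (if k = 0 then complex_of_real l0 else if k = 1 then complex_of_real l1
     else if k \<le> 2*s+1 then z (k - 1) else cnj (z (k - 1 - 2*s)))"

lemma eigvec_mat_carrier [simp]: "eigvec_mat s \<in> carrier_mat (4*s+2) (4*s+2)"
  by (simp add: eigvec_mat_def)

lemma map_eigval_upt:
  "map (eigval s l0 l1 z) [0..<4*s+2] =
     [complex_of_real l0, complex_of_real l1] @ map z [1..<2*s+1] @ map (\<lambda>j. cnj (z j)) [1..<2*s+1]"
proof -
  have "[0..<2+2*s] = [0..<2] @ [2..<2+2*s]"
    and "[0..<(2+2*s)+2*s] = [0..<2+2*s] @ [2+2*s..<(2+2*s)+2*s]"
    by (rule upt_add_eq_append; simp)+
  moreover have "[0..<2] = [0, 1::nat]" by (simp add: upt_rec)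
  moreover have "4*s+2 = (2+2*s)+2*s" "1+1 = (2::nat)" "2*s+1+1 = 2+2*s" "2*s+1+(2*s+1) = (2+2*s)+2*s"
    by simp_all
  ultimately have "[0..<4*s+2] = [0, 1] @ map (\<lambda>j. j + 1) [1..<2*s+1] @ map (\<lambda>j. j + (2*s+1)) [1..<2*s+1]"
    by (simp only: map_plus_upt append_assoc add.commute[of 1 "2*s+1"])
  then show ?thesis
    by (auto simp: eigval_def intro!: map_cong)
qed

lemma eigvec_mat_diag_adjoint:
  "eigvec_mat s * mat_diag (4*s+2) (eigval s l0 l1 z) * mat_adjoint (eigvec_mat s) =
     map_mat complex_of_real (cs_mat s l0 l1 z)"
proof (rule eq_matI)
  let ?n = "4*s+2"
  let ?c = "complex_of_real (sqrt (real ?n))"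
  let ?d = "eigval s l0 l1 z"
  fix a b assume "a < dim_row (map_mat complex_of_real (cs_mat s l0 l1 z))"
    "b < dim_col (map_mat complex_of_real (cs_mat s l0 l1 z))"
  then have a: "a < ?n" and b: "b < ?n" by (simp_all add: cs_mat_def)
  let ?w = "\<lambda>j. 2 * Re (z j * wave s j a * cnj (wave s j b))"
  define G where "G k = eigvec s a k * ?d k * cnj (eigvec s b k)" for k
  have "sqrt (real ?n) * sqrt (real ?n) = real ?n" by simp
  then have cc: "?c * ?c = complex_of_real (real ?n)" by (metis of_real_mult)
  have "(eigvec_mat s * mat_diag ?n ?d * mat_adjoint (eigvec_mat s)) $$ (a, b) =
      (\<Sum>k<?n. eigvec_mat s $$ (a, k) * ?d k * cnj (eigvec_mat s $$ (b, k)))"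
    by (rule index_mult_diag_mult_adjoint[OF eigvec_mat_carrier a b])
  also have "\<dots> = (\<Sum>k<?n. eigvec s a k / ?c * ?d k * cnj (eigvec s b k / ?c))"
    using a b by (intro sum.cong refl) (simp add: eigvec_mat_def)
  also have "\<dots> = (\<Sum>k<?n. G k) / (?c * ?c)"
    unfolding G_def sum_divide_distrib by (intro sum.cong refl) (simp add: divide_divide_eq_left)
  also have "(\<Sum>k<?n. G k) = G 0 + G 1 + (\<Sum>j=1..2*s. G (j+1) + G (j+1+2*s))"
    using sum_lessThan_pairs[of G "2*s"] by simp
  also have "(\<Sum>j=1..2*s. G (j+1) + G (j+1+2*s)) = (\<Sum>j=1..2*s. complex_of_real (?w j))"
  proof (rule sum.cong)
    fix j assume "j \<in> {1..2*s}"
    then have "G (j+1) + G (j+1+2*s) =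
        z j * wave s j a * cnj (wave s j b) + cnj (z j * wave s j a * cnj (wave s j b))"
      by (simp add: G_def eigvec_def eigval_def)
    then show "G (j+1) + G (j+1+2*s) = complex_of_real (?w j)"
      by (simp only: complex_add_cnj)
  qed simp
  also have "(G 0 + G 1 + (\<Sum>j=1..2*s. complex_of_real (?w j))) / (?c * ?c) =
      complex_of_real ((l0 + half_sign s a * half_sign s b * l1 + (\<Sum>j=1..2*s. ?w j)) / real ?n)"
    unfolding cc by (simp add: G_def eigvec_def eigval_def)
  also have "\<dots> = map_mat complex_of_real (cs_mat s l0 l1 z) $$ (a, b)"
    using a b by (simp add: cs_mat_def)
  finally show "(eigvec_mat s * mat_diag ?n ?d * mat_adjoint (eigvec_mat s)) $$ (a, b) =
      map_mat complex_of_real (cs_mat s l0 l1 z) $$ (a, b)" .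
qed (simp_all add: cs_mat_def eigvec_mat_def)

lemma eigvec_mat_unitary: "eigvec_mat s * mat_adjoint (eigvec_mat s) = 1\<^sub>m (4*s+2)"
proof -
  have "eigval s 1 1 (\<lambda>_. 1) = (\<lambda>_. 1)" by (auto simp: eigval_def)
  then have "eigvec_mat s * mat_adjoint (eigvec_mat s) =
      eigvec_mat s * mat_diag (4*s+2) (eigval s 1 1 (\<lambda>_. 1)) * mat_adjoint (eigvec_mat s)"
    by (simp only: mat_diag_one right_mult_one_mat[OF eigvec_mat_carrier])
  also have "\<dots> = map_mat complex_of_real (cs_mat s 1 1 (\<lambda>_. 1))"
    by (rule eigvec_mat_diag_adjoint)
  also have "\<dots> = 1\<^sub>m (4*s+2)"
    unfolding cs_mat_one by auto
  finally show ?thesis .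
qed

lemma cs_mat_nonneg:
  assumes "l1 \<le> 0" and "l0 + l1 - 2 * (\<Sum>j=1..2*s. cmod (z j)) \<ge> 0"
  shows "nonneg_mat (cs_mat s l0 l1 z)"
  unfolding nonneg_mat_def
proof (intro allI impI)
  fix a b assume "a < dim_row (cs_mat s l0 l1 z)" "b < dim_col (cs_mat s l0 l1 z)"
  then have a: "a < 4*s+2" and b: "b < 4*s+2" by (simp_all add: cs_mat_def)
  have term_bound: "- (2 * cmod (z j)) \<le> 2 * Re (z j * wave s j a * cnj (wave s j b))" for j
  proof -
    have "cmod (z j * wave s j a * cnj (wave s j b)) = cmod (z j)"
      by (simp add: norm_mult wave_def half_sign_def)
    then show ?thesis
      using abs_Re_le_cmod[of "z j * wave s j a * cnj (wave s j b)"] by linarith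
  qed
  have "(\<Sum>j=1..2*s. - (2 * cmod (z j))) \<le> (\<Sum>j=1..2*s. 2 * Re (z j * wave s j a * cnj (wave s j b)))"
    by (rule sum_mono) (rule term_bound)
  then have "- 2 * (\<Sum>j=1..2*s. cmod (z j)) \<le> (\<Sum>j=1..2*s. 2 * Re (z j * wave s j a * cnj (wave s j b)))"
    by (simp add: sum_negf sum_distrib_left)
  moreover have "l1 \<le> half_sign s a * half_sign s b * l1"
    using assms(1) by (simp add: half_sign_def)
  ultimately show "cs_mat s l0 l1 z $$ (a, b) \<ge> 0"
    using a b assms(2) by (simp add: cs_mat_def)
qed

lemma half_sign_flip: "a < 4*s+2 \<Longrightarrow> half_sign s (4*s+1 - a) = - half_sign s a"
  by (auto simp: half_sign_def)

lemma wave_flip: "a < 4*s+2 \<Longrightarrow> wave s j (4*s+1 - a) = (if j \<le> s then 1 else -1) * wave s j a"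
  by (auto simp: wave_def fold_index_def half_sign_def)

lemma cs_mat_centrosymmetric: "centrosymmetric (cs_mat s l0 l1 z)"
proof (rule centrosymmetricI[OF cs_mat_carrier])
  fix a b assume a: "a < 4*s+2" and b: "b < 4*s+2"
  have "(\<Sum>j=1..2*s. 2 * Re (z j * wave s j (4*s+1 - a) * cnj (wave s j (4*s+1 - b)))) =
        (\<Sum>j=1..2*s. 2 * Re (z j * wave s j a * cnj (wave s j b)))"
    unfolding wave_flip[OF a] wave_flip[OF b] by (intro sum.cong refl) (simp add: algebra_simps)
  moreover have "half_sign s (4*s+1 - a) * half_sign s (4*s+1 - b) = half_sign s a * half_sign s b"
    using half_sign_flip[OF a] half_sign_flip[OF b] by simp
  ultimately show "cs_mat s l0 l1 z $$ (4*s+2 - 1 - a, 4*s+2 - 1 - b) = cs_mat s l0 l1 z $$ (a, b)"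
    using a b by (simp add: cs_mat_def)
qed

theorem theorem3p10:
  fixes s :: nat and l0 l1 :: real and z :: "nat \<Rightarrow> complex"
  assumes "s \<ge> 1"
    and "l0 \<ge> 0" and "0 > l1"
    and "\<forall>j\<in>{1..2*s}. Im (z j) > 0"
    and "l0 + l1 - 2 * (\<Sum>j=1..2*s. cmod (z j)) \<ge> 0"
  shows "\<exists>Q :: real mat. Q \<in> carrier_mat (4*s+2) (4*s+2) \<and>
           normal_mat (map_mat complex_of_real Q) \<and> centrosymmetric Q \<and> nonneg_mat Q \<and>
           has_eigenvalues (map_mat complex_of_real Q)
             ([complex_of_real l0, complex_of_real l1] @ map z [1..<2*s+1] @ map (\<lambda>j. cnj (z j)) [1..<2*s+1])"
proof -
  let ?U = "eigvec_mat s" and ?Q = "cs_mat s l0 l1 z"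
  have decomp: "map_mat complex_of_real ?Q = ?U * mat_diag (4*s+2) (eigval s l0 l1 z) * mat_adjoint ?U"
    by (rule eigvec_mat_diag_adjoint[symmetric])
  have "normal_mat (map_mat complex_of_real ?Q)"
    unfolding decomp by (rule normal_mat_unitary_diag[OF eigvec_mat_carrier eigvec_mat_unitary])
  moreover have "has_eigenvalues (map_mat complex_of_real ?Q)
      ([complex_of_real l0, complex_of_real l1] @ map z [1..<2*s+1] @ map (\<lambda>j. cnj (z j)) [1..<2*s+1])"
    unfolding decomp map_eigval_upt[symmetric]
    by (rule has_eigenvalues_unitary_diag[OF eigvec_mat_carrier eigvec_mat_unitary])
  moreover have "nonneg_mat ?Q"
    using assms(3,5) by (intro cs_mat_nonneg) simp_all
  ultimately show ?thesis
    using cs_mat_carrier cs_mat_centrosymmetric by blast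
qed

end
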